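(* Let $\mu$ be a locally finite Borel measure on $\mathbb{R}$. Then there is a Lebesgue null set $\mathcal{M}\subseteq\mathbb{R}$ such that for every $x_0\in\mathbb{R}\setminus\mathcal{M}$, every $c_0>0$ and every $0<\varepsilon<\delta<c_0$ there is a constant $C$, depending on $x_0$, $c_0$ and $\mu$, such that for all $t>0$ \[ \int_{[x_0,x_0+\delta]}\mathrm{d}\mu(x)\,e^{-t(x-x_0)}\le C\frac{1-e^{-t\delta}}{t} \] and \[ \int_{[x_0+\varepsilon,x_0+\delta]}\mathrm{d}\mu(x)\,e^{-t(x-x_0)}\le Ce^{-t\varepsilon/2}\frac{1-e^{-t\delta/2}}{t/2}\le C\frac{e^{-t\varepsilon/2}}{t/2}. \] *)

theory Defs
  imports "HOL-Analysis.Analysis"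
begin

end

theory Submission
  imports Defs
begin

text \<open>
  For a locally finite measure \<open>\<mu>\<close> on the line, the points \<open>x\<close> with \<open>\<mu> (ball x r) > c r\<close> for
  some \<open>r < 1\<close> form an open set whose Lebesgue measure inside a fixed ball is \<open>O(1/c)\<close>, by the
  Vitali covering lemma; so the points where this happens for every \<open>c \<in> \<nat>\<close> form a null set \<open>N\<close>.
  Off \<open>N\<close> one has \<open>\<mu> {x0..x0+h} \<le> K h\<close> for \<open>0 < h \<le> c0\<close>. Cutting \<open>{x0..x0+\<delta>}\<close> according to
  the value \<open>j\<close> of \<open>\<lfloor>t (x - x0)\<rfloor>\<close>, where the integrand is at most \<open>exp (- j)\<close>, bounds the
  integral by \<open>6 K min \<delta> (1/t) \<le> 18 K (1 - exp (- t \<delta>)) / t\<close>. The estimate on \<open>{x0+\<epsilon>..x0+\<delta>}\<close>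
  is the same bound at rate \<open>t/2\<close>, because there
  \<open>exp (- t (x - x0)) \<le> exp (- t \<epsilon> / 2) exp (- (t/2) (x - x0))\<close>.
\<close>

lemma sum_Suc_times_exp_neg_le:
  "(\<Sum>j<n. (real j + 1) * exp (- real j)) \<le> 6"
proof -
  define q :: real where "q = exp (-1/2)"
  have q_pos: "0 < q" and q_le: "q \<le> 2/3"
  proof -
    show "0 < q" by (simp add: q_def)
    have "1 + 1/2 \<le> exp (1/2::real)" using exp_ge_add_one_self[of "1/2"] by simp
    then show "q \<le> 2/3" by (simp add: q_def exp_minus field_simps)
  qed
  have term_le: "(real j + 1) * exp (- real j) \<le> 2 * q ^ j" for j
  proof -
    have "real j + 1 \<le> 2 * exp (real j / 2)"
      using exp_ge_add_one_self[of "real j / 2"] by linarith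
    then have "(real j + 1) * exp (- real j) \<le> 2 * exp (real j / 2) * exp (- real j)"
      by (intro mult_right_mono) auto
    also have "\<dots> = 2 * q ^ j"
      by (simp add: q_def exp_of_nat_mult[symmetric] mult.assoc exp_add[symmetric])
    finally show ?thesis .
  qed
  have "(\<Sum>j<n. (real j + 1) * exp (- real j)) \<le> (\<Sum>j<n. 2 * q ^ j)"
    by (intro sum_mono term_le)
  also have "\<dots> = 2 * ((1 - q ^ n) / (1 - q))"
    using q_le by (simp add: sum_distrib_left[symmetric] sum_gp_strict)
  also have "\<dots> \<le> 2 / (1 - q)"
    using q_pos q_le by (simp add: divide_right_mono)
  also have "\<dots> \<le> 6" using q_le by (simp add: field_simps)
  finally show ?thesis .
qed

lemma min_le_3_one_minus_exp_neg:
  fixes s :: real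
  assumes "0 \<le> s"
  shows "min s 1 \<le> 3 * (1 - exp (- s))"
proof (cases "s \<le> 1")
  case True
  have "(1 + s) * exp (- s) \<le> 1"
    using exp_ge_add_one_self[of s] by (simp add: exp_minus field_simps)
  moreover have "1/3 \<le> exp (- s)"
  proof -
    have "1/3 \<le> exp (-1::real)" using exp_le by (simp add: exp_minus field_simps)
    also have "\<dots> \<le> exp (- s)" using True by simp
    finally show ?thesis .
  qed
  ultimately have "s / 3 \<le> 1 - exp (- s)"
    using mult_left_mono[of "1/3" "exp (- s)" s] assms by (simp add: algebra_simps)
  with True show ?thesis by simp
next
  case False
  have "exp (- s) \<le> exp (-1)" using False by simp
  moreover have "exp (-1::real) \<le> 1/2"
    using exp_ge_add_one_self[of 1] by (simp add: exp_minus field_simps)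
  ultimately have "exp (- s) \<le> 1/2" by linarith
  with False show ?thesis by (simp add: min_def)
qed

lemma set_integrable_exp_decay:
  fixes M :: "real measure"
  assumes sets: "sets M = sets borel" and fin: "emeasure M {a..b} < \<infinity>"
    and "x0 \<le> a" "0 \<le> s"
  shows "set_integrable M {a..b} (\<lambda>x. exp (- s * (x - x0)))"
proof (rule set_integrable_bound)
  show "set_integrable M {a..b} (\<lambda>_. 1 :: real)"
    using fin by (simp add: set_integrable_def sets)
  show "set_borel_measurable M {a..b} (\<lambda>x. exp (- s * (x - x0)))"
    unfolding set_borel_measurable_def measurable_cong_sets[OF sets refl] by measurable
  show "AE x in M. x \<in> {a..b} \<longrightarrow> norm (exp (- s * (x - x0))) \<le> norm (1 :: real)"
    using assms(3,4) by (intro AE_I2) (auto intro: mult_nonneg_nonneg)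
qed

lemma set_integral_exp_decay_le_measure:
  fixes M :: "real measure"
  assumes sets: "sets M = sets borel" and fin: "emeasure M {x0..x0+\<delta>} < \<infinity>" and "0 \<le> t"
  shows "(LINT x:{x0..x0+\<delta>}|M. exp (- t * (x - x0))) \<le> measure M {x0..x0+\<delta>}"
proof -
  have "(LINT x:{x0..x0+\<delta>}|M. exp (- t * (x - x0))) \<le> (LINT x:{x0..x0+\<delta>}|M. 1)"
    using assms by (intro set_integral_mono set_integrable_exp_decay)
      (auto simp: set_integrable_def intro: mult_nonneg_nonneg)
  also have "\<dots> = measure M {x0..x0+\<delta>}"
    using fin by (simp add: set_integral_const sets)
  finally show ?thesis .
qed

lemma set_integral_exp_decay_le_linear_growth:
  fixes M :: "real measure"
  assumes sets: "sets M = sets borel" and fin: "emeasure M {x0..x0+\<delta>} < \<infinity>"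
    and \<delta>: "0 < \<delta>" and t: "0 < t" and K: "0 \<le> K"
    and growth: "\<And>h. 0 < h \<Longrightarrow> h \<le> \<delta> \<Longrightarrow> measure M {x0..x0+h} \<le> K * h"
  shows "(LINT x:{x0..x0+\<delta>}|M. exp (- t * (x - x0))) \<le> 6 * K / t"
proof -
  define A where "A = {x0..x0+\<delta>}"
  define n where "n = nat \<lfloor>t * \<delta>\<rfloor> + 1"
  define S where "S j = {x0..x0 + min \<delta> ((real j + 1) / t)}" for j :: nat
  have S_sets: "S j \<in> sets M" for j by (simp add: S_def sets)
  have S_fin: "emeasure M (S j) < \<infinity>" for j
    using emeasure_mono[of "S j" A M] fin by (auto simp: S_def A_def sets)
  have S_le: "measure M (S j) \<le> K * ((real j + 1) / t)" for j
  proof -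
    have "measure M (S j) \<le> K * min \<delta> ((real j + 1) / t)"
      unfolding S_def using \<delta> t by (intro growth) auto
    also have "\<dots> \<le> K * ((real j + 1) / t)" using K by (intro mult_left_mono) auto
    finally show ?thesis .
  qed
  have pointwise: "indicator A x * exp (- t * (x - x0)) \<le> (\<Sum>j<n. exp (- real j) * indicator (S j) x)"
    for x
  proof (cases "x \<in> A")
    case True
    define j where "j = nat \<lfloor>t * (x - x0)\<rfloor>"
    have "0 \<le> t * (x - x0)" "t * (x - x0) \<le> t * \<delta>" using True t by (auto simp: A_def)
    then have j_le: "real j \<le> t * (x - x0)" and j_gt: "t * (x - x0) < real j + 1"
      and "j < n"
      by (auto simp: j_def n_def nat_le_iff floor_mono less_Suc_eq_le nat_mono)
    have "x - x0 < (real j + 1) / t" using t j_gt by (simp add: field_simps)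
    then have "x \<in> S j" using True by (auto simp: S_def A_def)
    have "indicator A x * exp (- t * (x - x0)) \<le> exp (- real j) * indicator (S j) x"
      using True j_le \<open>x \<in> S j\<close> by simp
    also have "\<dots> \<le> (\<Sum>j<n. exp (- real j) * indicator (S j) x)"
      using \<open>j < n\<close> by (intro member_le_sum) auto
    finally show ?thesis .
  qed (simp add: sum_nonneg)
  have "integrable M (\<lambda>x. \<Sum>j<n. exp (- real j) * indicator (S j) x)"
    using S_sets S_fin by (intro Bochner_Integration.integrable_sum integrable_mult_right integrable_real_indicator)
  then have "(LINT x:A|M. exp (- t * (x - x0)))
      \<le> integral\<^sup>L M (\<lambda>x. \<Sum>j<n. exp (- real j) * indicator (S j) x)"
    using set_integrable_exp_decay[OF sets fin, of x0 t] t pointwise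
    unfolding set_lebesgue_integral_def set_integrable_def A_def
    by (intro integral_mono) auto
  also have "\<dots> = (\<Sum>j<n. exp (- real j) * measure M (S j))"
    using S_sets S_fin by (subst Bochner_Integration.integral_sum) (auto simp: sets_eq_imp_space_eq[OF sets])
  also have "\<dots> \<le> (\<Sum>j<n. exp (- real j) * (K * ((real j + 1) / t)))"
    using S_le by (intro sum_mono mult_left_mono) auto
  also have "\<dots> = K / t * (\<Sum>j<n. (real j + 1) * exp (- real j))"
    by (simp add: sum_distrib_left field_simps)
  also have "\<dots> \<le> K / t * 6"
    using K t sum_Suc_times_exp_neg_le by (intro mult_left_mono) auto
  finally show ?thesis by (simp add: A_def mult.commute)
qed

lemma set_integral_exp_decay_le:
  fixes M :: "real measure"
  assumes sets: "sets M = sets borel" and fin: "emeasure M {x0..x0+\<delta>} < \<infinity>"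
    and \<delta>: "0 < \<delta>" and t: "0 < t" and K: "0 \<le> K"
    and growth: "\<And>h. 0 < h \<Longrightarrow> h \<le> \<delta> \<Longrightarrow> measure M {x0..x0+h} \<le> K * h"
  shows "(LINT x:{x0..x0+\<delta>}|M. exp (- t * (x - x0))) \<le> 18 * K * (1 - exp (- t * \<delta>)) / t"
proof -
  have "(LINT x:{x0..x0+\<delta>}|M. exp (- t * (x - x0))) \<le> K * \<delta>"
    using order_trans[OF set_integral_exp_decay_le_measure[OF sets fin] growth] t \<delta> by simp
  also have "\<dots> \<le> 6 * K * \<delta>" using K \<delta> by simp
  finally have "(LINT x:{x0..x0+\<delta>}|M. exp (- t * (x - x0))) \<le> 6 * K * min (t * \<delta>) 1 / t"
    using set_integral_exp_decay_le_linear_growth[OF assms] t by (auto simp: min_def field_simps)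
  also have "\<dots> \<le> 6 * K * (3 * (1 - exp (- (t * \<delta>)))) / t"
    using min_le_3_one_minus_exp_neg[of "t * \<delta>"] t \<delta> K
    by (intro divide_right_mono mult_left_mono) auto
  finally show ?thesis by (simp add: algebra_simps)
qed

lemma set_integral_exp_decay_tail_le_half_rate:
  fixes M :: "real measure"
  assumes sets: "sets M = sets borel" and fin: "emeasure M {x0..x0+\<delta>} < \<infinity>"
    and \<epsilon>: "0 \<le> \<epsilon>" and t: "0 \<le> t"
  shows "(LINT x:{x0+\<epsilon>..x0+\<delta>}|M. exp (- t * (x - x0)))
    \<le> exp (- t * \<epsilon> / 2) * (LINT x:{x0..x0+\<delta>}|M. exp (- (t/2) * (x - x0)))"
proof -
  have fin': "emeasure M {x0+\<epsilon>..x0+\<delta>} < \<infinity>"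
    using emeasure_mono[of "{x0+\<epsilon>..x0+\<delta>}" "{x0..x0+\<delta>}" M] fin \<epsilon> by (auto simp: sets)
  have pointwise: "indicator {x0+\<epsilon>..x0+\<delta>} x * exp (- t * (x - x0))
      \<le> exp (- t * \<epsilon> / 2) * (indicator {x0..x0+\<delta>} x * exp (- (t/2) * (x - x0)))" for x
  proof (cases "x \<in> {x0+\<epsilon>..x0+\<delta>}")
    case True
    then have "t * \<epsilon> \<le> t * (x - x0)" using t by (intro mult_left_mono) auto
    then have "exp (- t * (x - x0)) \<le> exp (- t * \<epsilon> / 2 + - (t/2) * (x - x0))" by simp
    also have "\<dots> = exp (- t * \<epsilon> / 2) * exp (- (t/2) * (x - x0))" by (rule exp_add)
    finally show ?thesis using True \<epsilon> by simp
  qed simp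
  show ?thesis
    using set_integrable_exp_decay[OF sets fin', of x0 t] set_integrable_exp_decay[OF sets fin, of x0 "t/2"]
      \<epsilon> t pointwise
    unfolding set_lebesgue_integral_def set_integrable_def
    by (subst integral_mult_right_zero[symmetric]) (intro integral_mono integrable_mult_right, auto)
qed

lemma set_integral_exp_decay_tail_le:
  fixes M :: "real measure"
  assumes sets: "sets M = sets borel" and fin: "emeasure M {x0..x0+\<delta>} < \<infinity>"
    and \<delta>: "0 < \<delta>" and \<epsilon>: "0 \<le> \<epsilon>" and t: "0 < t" and K: "0 \<le> K"
    and growth: "\<And>h. 0 < h \<Longrightarrow> h \<le> \<delta> \<Longrightarrow> measure M {x0..x0+h} \<le> K * h"
  shows "(LINT x:{x0+\<epsilon>..x0+\<delta>}|M. exp (- t * (x - x0)))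
    \<le> 18 * K * exp (- t * \<epsilon> / 2) * (1 - exp (- t * \<delta> / 2)) / (t / 2)"
proof -
  have "(LINT x:{x0+\<epsilon>..x0+\<delta>}|M. exp (- t * (x - x0)))
      \<le> exp (- t * \<epsilon> / 2) * (LINT x:{x0..x0+\<delta>}|M. exp (- (t/2) * (x - x0)))"
    using \<epsilon> t by (intro set_integral_exp_decay_tail_le_half_rate[OF sets fin]) auto
  also have "\<dots> \<le> exp (- t * \<epsilon> / 2) * (18 * K * (1 - exp (- (t/2) * \<delta>)) / (t/2))"
    using set_integral_exp_decay_le[OF sets fin \<delta> _ K growth, of "t/2"] t by (intro mult_left_mono) auto
  finally show ?thesis by (simp add: algebra_simps)
qed

lemma emeasure_UN_countable_le:
  assumes sets: "\<And>i. i \<in> I \<Longrightarrow> X i \<in> sets M" and I: "countable I"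
  shows "emeasure M (\<Union>i\<in>I. X i) \<le> (\<integral>\<^sup>+i. emeasure M (X i) \<partial>count_space I)"
proof -
  have indicator_le: "indicator (\<Union>i\<in>I. X i) x \<le> (\<integral>\<^sup>+i. indicator (X i) x \<partial>count_space I)" for x
  proof (cases "x \<in> (\<Union>i\<in>I. X i)")
    case True
    then obtain j where j: "j \<in> I" "x \<in> X j" by auto
    have "(1::ennreal) = (\<integral>\<^sup>+i. indicator {j} i \<partial>count_space I)"
      using j by (subst nn_integral_indicator) auto
    also have "\<dots> \<le> (\<integral>\<^sup>+i. indicator (X i) x \<partial>count_space I)"
      using j by (intro nn_integral_mono) (auto split: split_indicator)
    finally show ?thesis using True by simp
  qed simp
  have "(\<Union>i\<in>I. X i) \<in> sets M" using I sets by (intro sets.countable_UN') auto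
  then have "emeasure M (\<Union>i\<in>I. X i) = (\<integral>\<^sup>+x. indicator (\<Union>i\<in>I. X i) x \<partial>M)" by simp
  also have "\<dots> \<le> (\<integral>\<^sup>+x. \<integral>\<^sup>+i. indicator (X i) x \<partial>count_space I \<partial>M)"
    by (intro nn_integral_mono indicator_le)
  also have "\<dots> = (\<integral>\<^sup>+i. \<integral>\<^sup>+x. indicator (X i) x \<partial>M \<partial>count_space I)"
    using I sets by (intro nn_integral_count_space_nn_integral) auto
  also have "\<dots> = (\<integral>\<^sup>+i. emeasure M (X i) \<partial>count_space I)"
    using sets by (intro nn_integral_cong) auto
  finally show ?thesis .
qed

lemma emeasure_ball_less_top:
  fixes M :: "'a::heine_borel measure"
  assumes sets: "sets M = sets borel" and locfin: "\<And>K. compact K \<Longrightarrow> emeasure M K < \<infinity>"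
  shows "emeasure M (ball x r) < \<infinity>"
proof -
  have "emeasure M (ball x r) \<le> emeasure M (cball x r)"
    by (intro emeasure_mono) (auto simp: sets)
  then show ?thesis using locfin[of "cball x r"] by simp
qed

definition density_exceeds :: "real measure \<Rightarrow> real \<Rightarrow> real set" where
  "density_exceeds M c = {x. \<exists>r. 0 < r \<and> r < 1 \<and> ennreal (c * r) < emeasure M (ball x r)}"

lemma open_density_exceeds:
  assumes sets: "sets M = sets borel"
  shows "open (density_exceeds M c)"
proof (unfold open_contains_ball, intro ballI)
  fix x assume "x \<in> density_exceeds M c"
  then obtain r where r: "0 < r" "r < 1" "ennreal (c * r) < emeasure M (ball x r)"
    by (auto simp: density_exceeds_def)
  have "\<forall>\<^sub>F \<eta> in at_right 0. 0 < \<eta> \<and> r + \<eta> < 1 \<and> ennreal (c * (r + \<eta>)) < emeasure M (ball x r)"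
  proof (intro eventually_conj eventually_at_right_less)
    have "((\<lambda>\<eta>. r + \<eta>) \<longlongrightarrow> r + 0) (at_right 0)"
      by (intro tendsto_intros)
    then show "\<forall>\<^sub>F \<eta> in at_right 0. r + \<eta> < 1" using r(2) by (simp add: order_tendstoD(2))
    have "((\<lambda>\<eta>. ennreal (c * (r + \<eta>))) \<longlongrightarrow> ennreal (c * (r + 0))) (at_right 0)"
      by (intro tendsto_intros)
    then show "\<forall>\<^sub>F \<eta> in at_right 0. ennreal (c * (r + \<eta>)) < emeasure M (ball x r)"
      using r(3) by (simp add: order_tendstoD(2))
  qed
  then obtain \<eta> where \<eta>: "0 < \<eta>" "r + \<eta> < 1" "ennreal (c * (r + \<eta>)) < emeasure M (ball x r)"
    by (blast dest: eventually_happens'[OF trivial_limit_at_right_real])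
  show "\<exists>e>0. ball x e \<subseteq> density_exceeds M c"
  proof (intro exI conjI subsetI)
    fix y assume "y \<in> ball x \<eta>"
    then have "ball x r \<subseteq> ball y (r + \<eta>)"
      by (auto simp: dist_commute intro!: dist_triangle_less_add)
    then have "emeasure M (ball x r) \<le> emeasure M (ball y (r + \<eta>))"
      by (intro emeasure_mono) (auto simp: sets)
    then show "y \<in> density_exceeds M c"
      using r \<eta> unfolding density_exceeds_def by (intro CollectI exI[of _ "r + \<eta>"]) auto
  qed (use \<eta> in auto)
qed

lemma emeasure_density_exceeds_le:
  assumes sets: "sets M = sets borel" and c: "0 < c"
  shows "emeasure lborel (density_exceeds M c \<inter> ball a R)
    \<le> ennreal (10 / c) * emeasure M (ball a (R + 1))"
proof -
  define S where "S = density_exceeds M c \<inter> ball a R"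
  obtain r where r: "\<And>x. x \<in> S \<Longrightarrow> 0 < r x \<and> r x < 1 \<and> ennreal (c * r x) < emeasure M (ball x (r x))"
  proof -
    have "\<forall>x\<in>S. \<exists>r. 0 < r \<and> r < 1 \<and> ennreal (c * r) < emeasure M (ball x r)"
      by (auto simp: S_def density_exceeds_def)
    then show ?thesis using that by (metis (mono_tags, lifting) bchoice)
  qed
  have "S \<subseteq> (\<Union>x\<in>S. ball x (r x))" using r by fastforce
  moreover have "\<And>x. x \<in> S \<Longrightarrow> 0 < r x \<and> r x \<le> 1" using r by (auto intro: less_imp_le)
  ultimately obtain C where C: "countable C" "C \<subseteq> S"
    and disjoint: "pairwise (\<lambda>i j. disjnt (ball i (r i)) (ball j (r j))) C"
    and cover: "S \<subseteq> (\<Union>i\<in>C. ball i (5 * r i))"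
    by (rule Vitali_covering_lemma_balls[where a="\<lambda>x. x"]) blast+
  have "emeasure lborel S \<le> emeasure lborel (\<Union>i\<in>C. ball i (5 * r i))"
    using cover by (intro emeasure_mono) (auto intro: borel_open)
  also have "\<dots> \<le> (\<integral>\<^sup>+i. emeasure lborel (ball i (5 * r i)) \<partial>count_space C)"
    using C(1) by (intro emeasure_UN_countable_le) auto
  also have "\<dots> = (\<integral>\<^sup>+i. ennreal (10 / c) * ennreal (c * r i) \<partial>count_space C)"
  proof (intro nn_integral_cong)
    fix i assume "i \<in> space (count_space C)"
    then have "0 < r i" using C(2) r by auto
    then have "emeasure lborel (ball i (5 * r i)) = ennreal (10 * r i)"
      by (simp add: ball_eq_greaterThanLessThan)
    also have "\<dots> = ennreal (10 / c) * ennreal (c * r i)"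
      using c \<open>0 < r i\<close> by (simp add: ennreal_mult[symmetric])
    finally show "emeasure lborel (ball i (5 * r i)) = ennreal (10 / c) * ennreal (c * r i)" .
  qed
  also have "\<dots> \<le> (\<integral>\<^sup>+i. ennreal (10 / c) * emeasure M (ball i (r i)) \<partial>count_space C)"
    using C(2) r by (intro nn_integral_mono mult_left_mono) (auto intro: less_imp_le)
  also have "\<dots> = ennreal (10 / c) * (\<integral>\<^sup>+i. emeasure M (ball i (r i)) \<partial>count_space C)"
    by (rule nn_integral_cmult) simp
  also have "(\<integral>\<^sup>+i. emeasure M (ball i (r i)) \<partial>count_space C) = emeasure M (\<Union>i\<in>C. ball i (r i))"
    using disjoint C(1)
    by (intro emeasure_UN_countable[symmetric])
      (auto simp: sets disjoint_family_on_def pairwise_def disjnt_def)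
  also have "\<dots> \<le> emeasure M (ball a (R + 1))"
  proof (intro emeasure_mono subsetI)
    fix z assume "z \<in> (\<Union>i\<in>C. ball i (r i))"
    then obtain i where "i \<in> S" "dist i z < r i" using C(2) by auto
    then have "dist a i < R" "dist i z < 1" using r[of i] by (auto simp: S_def)
    then show "z \<in> ball a (R + 1)" using dist_triangle_less_add[of a i R z 1] by (simp add: dist_commute)
  qed (auto simp: sets)
  finally show ?thesis
    by (simp add: S_def mult_left_mono)
qed

lemma null_sets_Inter_density_exceeds:
  assumes sets: "sets M = sets borel" and fin: "\<And>x r. emeasure M (ball x r) < \<infinity>"
  shows "(\<Inter>k::nat. density_exceeds M (real k)) \<in> null_sets lborel"
proof -
  define N where "N = (\<Inter>k::nat. density_exceeds M (real k))"
  have N_sets: "N \<in> sets lborel"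
    unfolding N_def using open_density_exceeds[OF sets] by (intro sets.countable_INT) auto
  have "N \<inter> ball 0 (real R) \<in> null_sets lborel" for R :: nat
  proof -
    obtain L where L: "emeasure M (ball 0 (real R + 1)) = ennreal L" and "0 \<le> L"
      using fin[of 0 "real R + 1"] by (cases "emeasure M (ball 0 (real R + 1))") auto
    have bound: "emeasure lborel (N \<inter> ball 0 (real R)) \<le> ennreal (10 * L / real k)"
      if "0 < k" for k :: nat
    proof -
      have "emeasure lborel (N \<inter> ball 0 (real R))
          \<le> emeasure lborel (density_exceeds M (real k) \<inter> ball 0 (real R))"
        using open_density_exceeds[OF sets] by (intro emeasure_mono) (auto simp: N_def)
      also have "\<dots> \<le> ennreal (10 / real k) * emeasure M (ball 0 (real R + 1))"
        using that by (intro emeasure_density_exceeds_le sets) simp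
      finally show ?thesis using L \<open>0 \<le> L\<close> by (simp add: ennreal_mult[symmetric])
    qed
    have "(\<lambda>k. ennreal (10 * L / real k)) \<longlonglongrightarrow> ennreal 0"
      by (intro tendsto_ennrealI lim_const_over_n)
    then have "emeasure lborel (N \<inter> ball 0 (real R)) \<le> 0"
      using bound by (intro LIMSEQ_le_const[of _ 0]) (auto intro!: exI[of _ 1])
    then show ?thesis using N_sets by (auto intro: null_setsI)
  qed
  moreover have "N = (\<Union>R::nat. N \<inter> ball 0 (real R))"
  proof (intro equalityI subsetI)
    fix x assume "x \<in> N"
    moreover obtain R :: nat where "dist 0 x < real R" using reals_Archimedean2 by blast
    ultimately show "x \<in> (\<Union>R::nat. N \<inter> ball 0 (real R))" by auto
  qed auto
  ultimately show ?thesis unfolding N_def by (metis null_sets_UN)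
qed

lemma measure_interval_le_linear:
  fixes M :: "real measure"
  assumes sets: "sets M = sets borel" and fin: "emeasure M {x0..x0+c0} < \<infinity>"
    and x0: "x0 \<notin> density_exceeds M c" and c: "0 \<le> c" and h: "0 < h" "h \<le> c0"
  shows "measure M {x0..x0+h} \<le> (2 * c + 2 * measure M {x0..x0+c0}) * h"
proof (cases "h < 1/2")
  case True
  have "emeasure M {x0..x0+h} \<le> emeasure M (ball x0 (2 * h))"
    using h by (intro emeasure_mono) (auto simp: dist_real_def sets)
  also have "\<dots> \<le> ennreal (c * (2 * h))"
    using x0 True h unfolding density_exceeds_def by (auto simp: not_less dest: spec[of _ "2 * h"])
  finally have "measure M {x0..x0+h} \<le> c * (2 * h)"
    unfolding measure_def using c h by (intro enn2real_leI) auto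
  moreover have "0 \<le> 2 * measure M {x0..x0+c0} * h" using h by simp
  ultimately show ?thesis by (simp add: algebra_simps)
next
  case False
  have "measure M {x0..x0+h} \<le> measure M {x0..x0+c0}"
    using h fin by (intro measure_mono_fmeasurable) (auto simp: sets fmeasurable_def)
  also have "\<dots> \<le> 2 * measure M {x0..x0+c0} * h"
    using False mult_left_mono[of 1 "2 * h" "measure M {x0..x0+c0}"] by simp
  also have "\<dots> \<le> (2 * c + 2 * measure M {x0..x0+c0}) * h"
    using c h by (simp add: algebra_simps)
  finally show ?thesis .
qed

theorem lemma4p15:
  fixes M :: "real measure"
  assumes borel: "sets M = sets borel"
    and locfin: "\<And>K. compact K \<Longrightarrow> emeasure M K < \<infinity>"
  shows "\<exists>N. N \<in> null_sets lborel \<and>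
    (\<forall>x0. x0 \<notin> N \<longrightarrow> (\<forall>c0 > 0. \<exists>C::real.
       \<forall>\<epsilon> \<delta>. 0 < \<epsilon> \<and> \<epsilon> < \<delta> \<and> \<delta> < c0 \<longrightarrow>
       (\<forall>t::real > 0.
          (LINT x:{x0..x0+\<delta>}|M. exp (- t * (x - x0))) \<le> C * (1 - exp (- t * \<delta>)) / t
        \<and> (LINT x:{x0+\<epsilon>..x0+\<delta>}|M. exp (- t * (x - x0)))
            \<le> C * exp (- t * \<epsilon> / 2) * (1 - exp (- t * \<delta> / 2)) / (t / 2)
        \<and> C * exp (- t * \<epsilon> / 2) * (1 - exp (- t * \<delta> / 2)) / (t / 2)
            \<le> C * exp (- t * \<epsilon> / 2) / (t / 2))))"
proof -
  have fin_interval: "\<And>a b. emeasure M {a..b} < \<infinity>"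
    using locfin by simp
  have fin_ball: "\<And>x r. emeasure M (ball x r) < \<infinity>"
    using borel locfin by (rule emeasure_ball_less_top)
  define N where "N = (\<Inter>k::nat. density_exceeds M (real k))"
  have N: "N \<in> null_sets lborel"
    unfolding N_def using borel fin_ball by (rule null_sets_Inter_density_exceeds)
  show ?thesis
    apply (intro exI[of _ N] conjI allI impI N)
    subgoal premises x0_c0 for x0 c0
    proof -
      obtain k :: nat where k: "x0 \<notin> density_exceeds M (real k)"
        using x0_c0 by (auto simp: N_def)
      define K where "K = 2 * real k + 2 * measure M {x0..x0+c0}"
      have K: "0 \<le> K" by (simp add: K_def)
      have growth: "\<And>h. 0 < h \<Longrightarrow> h \<le> c0 \<Longrightarrow> measure M {x0..x0+h} \<le> K * h"
        unfolding K_def using measure_interval_le_linear[OF borel fin_interval k] by simp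
      show ?thesis
      proof (intro exI[of _ "18 * K"] allI impI conjI)
        fix \<epsilon> \<delta> t :: real assume \<epsilon>\<delta>: "0 < \<epsilon> \<and> \<epsilon> < \<delta> \<and> \<delta> < c0" and t: "0 < t"
        then have \<delta>: "0 < \<delta>" and growth_\<delta>: "\<And>h. 0 < h \<Longrightarrow> h \<le> \<delta> \<Longrightarrow> measure M {x0..x0+h} \<le> K * h"
          using growth by auto
        show "(LINT x:{x0..x0+\<delta>}|M. exp (- t * (x - x0))) \<le> 18 * K * (1 - exp (- t * \<delta>)) / t"
          by (rule set_integral_exp_decay_le[OF borel fin_interval \<delta> t K growth_\<delta>])
        show "(LINT x:{x0+\<epsilon>..x0+\<delta>}|M. exp (- t * (x - x0)))
            \<le> 18 * K * exp (- t * \<epsilon> / 2) * (1 - exp (- t * \<delta> / 2)) / (t / 2)"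
          using \<epsilon>\<delta> by (intro set_integral_exp_decay_tail_le[OF borel fin_interval \<delta> _ t K growth_\<delta>]) simp
        show "18 * K * exp (- t * \<epsilon> / 2) * (1 - exp (- t * \<delta> / 2)) / (t / 2)
            \<le> 18 * K * exp (- t * \<epsilon> / 2) / (t / 2)"
          using K t mult_left_mono[of "1 - exp (- t * \<delta> / 2)" 1 "18 * K * exp (- t * \<epsilon> / 2)"]
          by (intro divide_right_mono) auto
      qed
    qed
    done
qed

end
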